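(* Let $(\Gamma,x)\subset\Sigma$, $\lambda$, $\omega$, $D^{1/2}$, $\varepsilon$, $\mathcal L$ and the maps $S$, $T$, $T'$ be as in the context. Then $S\colon\mathbb C^\diamondsuit\to\mathcal L$, $T\colon\mathbb C^\diamondsuit\to\mathbb R^B$ and $T'\colon\mathbb C^\diamondsuit\to T'(\mathbb C^\diamondsuit)\subset\mathbb C^B$ are $\mathbb R$-linear isomorphisms, and for every $F\in\mathbb C^\diamondsuit$ the following are equivalent: (i) $\exp(i\pi/4)F$ is s-holomorphic around every vertex of $\Gamma$; (ii) $S(F)$ lies in the kernel of the Kac–Ward operator $\mathit{KW}(\Gamma,x)$; (iii) $T(F)$ lies in the kernel of the real Kasteleyn operator $\mathrm K^\omega(C_\Gamma,y)\colon\mathbb R^B\to\mathbb R^W$. Furthermore, if $\Gamma$ is isoradially embedded in a flat surface $\Sigma$ with critical weights, these conditions are also equivalent to: (iv) $T'(F)$ lies in the kernel of the discrete $\bar\partial$-operator $\bar\partial^{\varphi_\omega}_C$.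
   Context: Let $\Sigma$ be a closed connected oriented surface with a Riemannian metric, $\Gamma\subset\Sigma$ a finite connected graph with smoothly embedded edges whose faces are discs, with weights $x_e=\tan(\theta_e/2)$, $\theta_e\in[0,\pi/2]$. $\mathbb E$: oriented edges (origin $o$, terminus $t$, reversal $\bar e$), $z_e=z_{\bar e}$ midpoint, $\diamondsuit=\{z_e\}$, $\theta_{\bar e}=\theta_e$, $\mathbb E_v$ edges with origin $v$. Fix a vector field $\lambda$ with isolated zeros of even index in $\Sigma\setminus\Gamma$; $\alpha_\lambda(e,e')$ ($o(e')=t(e)$, $e'\ne\bar e$) is the rotation angle relative to $\lambda$ of the velocity along $e$ from $z_e$ to $t(e)$ then $e'$ to $z_{e'}$. $\mathit{KW}(\Gamma,x)$: $(\mathit{KW}f)(e)=f(e)-x_e\sum_{e'\in\mathbb E_{t(e)},e'\ne\bar e}e^{\frac i2\alpha_\lambda(e,e')}f(e')$. $a_e$: oriented angle at $z_e$ from $\lambda$ to $e$, $D_e=e^{ia_e}$; $R(e)$: next element of $\mathbb E_{o(e)}$ counterclockwise; $\beta_e=\pi+\alpha_\lambda(\bar e,R(e))$, $q_e=e^{i\beta_e/2}$. $\Pr(\cdot;u)$ is orthogonal projection of $\mathbb C$ onto $u\mathbb R$. s-holomorphicity: $G\in\mathbb C^\diamondsuit$ is s-holomorphic around $v$ if for all $e\in\mathbb E_v$, with $e'=R(e)$, $\Pr\big(G(z_e);[ie^{i(a_e+\theta_e)}]^{-1/2}\big)=\Pr\big(G(z_{e'});[ie^{i(a_{e'}-\theta_{e'})}]^{-1/2}\big)\exp(\tfrac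 i2(\beta_e-\theta_e-\theta_{e'}))$ (choice of square roots irrelevant). $C_\Gamma$: each edge replaced by a rectangle; for each orientation $e$, the vertex near $o(e)$ right of $e$ is black $\psi_B(e)$, the one near $o(e)$ left of $e$ is white $\psi_W(e)$; edges $\{\psi_W(e),\psi_B(e)\}$ weight $\cos\theta_e$, $\{\psi_W(e),\psi_B(\bar e)\}$ weight $\sin\theta_e$, corner edges $\{\psi_W(e),\psi_B(R(e))\}$ weight $1$; $B,W$ black/white sets. A Kasteleyn orientation $\omega\colon E(C_\Gamma)\to\{\pm1\}$ satisfies $\prod_{\partial f}\omega=(-1)^{|\partial f|/2+1}$ on each face $f$ of $C_\Gamma$; $\mathrm K^\omega\colon\mathbb R^B\to\mathbb R^W$, $(\mathrm K^\omega g)(w)=\sum_{b\sim w}\omega(w,b)y_{wb}g(b)$. Fix $\omega$ and square roots $D_e^{1/2}$ of $D_e$ such that $\mathit{KW}(\Gamma,x)\circ(I-qR)\circ D^{-1/2}\circ\psi_B=(I-ixJ)\circ D^{-1/2}\circ\psi_W\circ\mathrm K^\omega$ on $\mathbb C^B$ (such a pair exists), where $(Jf)(e)=f(\bar e)$, $(Rf)(e)=f(R(e))$, $q,x,D^{-1/2}=(D^{1/2})^{-1}$ act diagonally, $(\psi_Bg)(e)=g(\psi_B(e))$, $(\psi_Wh)(e)=h(\psi_W(e))$. Then $D^{1/2}_{R(e)}=\varepsilon(e)q_eD_e^{1/2}$ with $\varepsilon(e)\in\{\pm1\}$. Maps: $\mathcal L=\{f\in\mathbb C^{\mathbb E}: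 f(e)\in e^{-\frac i2a_e}\mathbb R\ \forall e\}$; $(SF)(e)=\sin(\theta_e/2)\Pr(F(z_e);e^{-\frac i2a_e})$. For $b=\psi_B(e_0)$, $v=o(e_0)$: $(TF)(b)=\sum_{e\in\mathbb E_v}\mathrm{Re}\big(\varepsilon_b(e)D_e^{1/2}\sin(\theta_e/2)F(z_e)\big)$, where $\varepsilon_b(R^k(e_0))=\varepsilon(e_0)\varepsilon(R(e_0))\cdots\varepsilon(R^{k-1}(e_0))$ for $0\le k<\deg v$ (empty product $=1$). $(T'F)(b)=e^{\frac i2\theta_{e_0}}(TF)(b)$. Isoradial case: $\Sigma$ is flat with conical singularities, obtained by gluing rhombi of common side $\delta$ whose distinguished diagonals form $\Gamma$, all cone angles odd multiples of $2\pi$; $\theta_e$ is the half-rhombus angle of $e$ and $x_e=\tan(\theta_e/2)$ (critical weights). Discrete $\bar\partial$ on $C_\Gamma$ for a cochain $\varphi$: for $w=\psi_W(e)$, $b_1=\psi_B(e)$, $b_2=\psi_B(\bar e)$, $b_3=\psi_B(R(e))$, $(\bar\partial^\varphi_Cg)(w)=\sin(2\theta_e)^{-1}\big(\varphi(w,b_1)\cos\theta_e g(b_1)+i\varphi(w,b_2)\sin\theta_e g(b_2)-e^{i\theta_e}\varphi(w,b_3)g(b_3)\big)$. $\varphi_\omega$ is the $S^1$-valued cochain (the discrete spin structure associated with $\omega$) given by $\varphi_\omega(w,b_1)=\omega(w,b_1)$, $\varphi_\omega(w,b_2)=-i\,\omega(w,b_2)$, $\varphi_\omega(w,b_3)=-\exp(-\tfrac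 i2(\theta_e+\theta_{R(e)}))\omega(w,b_3)$. *)

theory Defs
  imports Complex_Main
begin

text \<open>
Combinatorial/angle model of a graph Gamma cellularly embedded in a closed oriented surface.
Oriented edges form a finite set E of type 'e; rv is the reversal e -> bar e, org the origin,
R the counterclockwise successor in E_{o(e)}. The black vertex psi_B(e) and the white vertex
psi_W(e) of C_Gamma are identified with the oriented edge e, so R^B = R^W = functions on E.
The midpoint z_e is represented by the two-element set {e, bar e}.
\<close>

definition tgt :: "('e \<Rightarrow> 'e) \<Rightarrow> ('e \<Rightarrow> 'v) \<Rightarrow> 'e \<Rightarrow> 'v" where
  "tgt rv org e = org (rv e)"

definition Ev :: "'e set \<Rightarrow> ('e \<Rightarrow> 'v) \<Rightarrow> 'v \<Rightarrow> 'e set" where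
  "Ev E org v = {e \<in> E. org e = v}"

definition deg :: "'e set \<Rightarrow> ('e \<Rightarrow> 'v) \<Rightarrow> 'v \<Rightarrow> nat" where
  "deg E org v = card (Ev E org v)"

definition orbit :: "('e \<Rightarrow> 'e) \<Rightarrow> 'e \<Rightarrow> 'e set" where
  "orbit f e = {(f ^^ k) e | k. True}"

definition zmid :: "('e \<Rightarrow> 'e) \<Rightarrow> 'e \<Rightarrow> 'e set" where
  "zmid rv e = {e, rv e}"

definition Diam :: "'e set \<Rightarrow> ('e \<Rightarrow> 'e) \<Rightarrow> 'e set set" where
  "Diam E rv = zmid rv ` E"

text \<open>Finite connected graph given by a rotation system (surface and faces are then determined;
faces are orbits of rv o R).\<close>
definition rotation_system :: "'e set \<Rightarrow> ('e \<Rightarrow> 'e) \<Rightarrow> ('e \<Rightarrow> 'v) \<Rightarrow> ('e \<Rightarrow> 'e) \<Rightarrow> bool" where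
  "rotation_system E rv org R \<longleftrightarrow>
     finite E \<and>
     (\<forall>e\<in>E. rv e \<in> E \<and> rv (rv e) = e \<and> rv e \<noteq> e) \<and>
     (\<forall>e\<in>E. R e \<in> E \<and> org (R e) = org e) \<and>
     (\<forall>e\<in>E. orbit R e = Ev E org (org e)) \<and>
     (\<forall>e\<in>E. \<forall>e'\<in>E. (e, e') \<in> ({(y, R y) | y. y \<in> E} \<union> {(y, rv y) | y. y \<in> E})\<^sup>*)"

definition weights_ok :: "'e set \<Rightarrow> ('e \<Rightarrow> 'e) \<Rightarrow> ('e \<Rightarrow> real) \<Rightarrow> bool" where
  "weights_ok E rv \<theta> \<longleftrightarrow> (\<forall>e\<in>E. 0 < \<theta> e \<and> \<theta> e \<le> pi / 2 \<and> \<theta> (rv e) = \<theta> e)"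

definition xw :: "('e \<Rightarrow> real) \<Rightarrow> 'e \<Rightarrow> real" where
  "xw \<theta> e = tan (\<theta> e / 2)"

definition cong2pi :: "real \<Rightarrow> real \<Rightarrow> bool" where
  "cong2pi x y \<longleftrightarrow> (\<exists>n::int. x - y = 2 * pi * of_int n)"

text \<open>Angle data induced by the Riemannian metric and the vector field lambda:
  c e   = (Riemannian) angle at o(e) from e counterclockwise to R(e);
  rho e = rotation angle relative to lambda of the velocity along e from z_e to t(e);
  a e   = oriented angle at z_e from lambda to e.\<close>
definition angle_data :: "'e set \<Rightarrow> ('e \<Rightarrow> 'e) \<Rightarrow> ('e \<Rightarrow> 'v) \<Rightarrow> ('e \<Rightarrow> 'e)
    \<Rightarrow> ('e \<Rightarrow> real) \<Rightarrow> ('e \<Rightarrow> real) \<Rightarrow> ('e \<Rightarrow> real) \<Rightarrow> bool" where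
  "angle_data E rv org R c rho a \<longleftrightarrow>
     (\<forall>e\<in>E. 0 < c e) \<and>
     (\<forall>e\<in>E. (\<Sum>e'\<in>Ev E org (org e). c e') = 2 * pi) \<and>
     (\<forall>e\<in>E. cong2pi (a (rv e)) (a e + pi)) \<and>
     (\<forall>e\<in>E. cong2pi (a (R e) + rho (rv (R e))) (a e + rho (rv e) + c e))"

definition corner_idx :: "('e \<Rightarrow> 'e) \<Rightarrow> 'e \<Rightarrow> 'e \<Rightarrow> nat" where
  "corner_idx R e e' = (LEAST k. 0 < k \<and> (R ^^ k) e = e')"

text \<open>alpha_lambda(e,e') for o(e') = t(e): rotation along e from z_e to t(e), turning angle at the
vertex (ccw angle from bar e to e' minus pi), rotation along e' from o(e') to z_e'.\<close>
definition alpha :: "('e \<Rightarrow> 'e) \<Rightarrow> ('e \<Rightarrow> 'e) \<Rightarrow> ('e \<Rightarrow> real) \<Rightarrow> ('e \<Rightarrow> real) \<Rightarrow> 'e \<Rightarrow> 'e \<Rightarrow> real" where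
  "alpha rv R c rho e e' =
     rho e - rho (rv e') + (\<Sum>j<corner_idx R (rv e) e'. c ((R ^^ j) (rv e))) - pi"

definition beta :: "('e \<Rightarrow> 'e) \<Rightarrow> ('e \<Rightarrow> 'e) \<Rightarrow> ('e \<Rightarrow> real) \<Rightarrow> ('e \<Rightarrow> real) \<Rightarrow> 'e \<Rightarrow> real" where
  "beta rv R c rho e = pi + alpha rv R c rho (rv e) (R e)"

definition qf :: "('e \<Rightarrow> 'e) \<Rightarrow> ('e \<Rightarrow> 'e) \<Rightarrow> ('e \<Rightarrow> real) \<Rightarrow> ('e \<Rightarrow> real) \<Rightarrow> 'e \<Rightarrow> complex" where
  "qf rv R c rho e = exp (\<i> * of_real (beta rv R c rho e / 2))"

definition Pr :: "complex \<Rightarrow> complex \<Rightarrow> complex" where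
  "Pr z u = of_real (Re (z * cnj u) / (cmod u)\<^sup>2) * u"

definition KW :: "'e set \<Rightarrow> ('e \<Rightarrow> 'e) \<Rightarrow> ('e \<Rightarrow> 'v) \<Rightarrow> ('e \<Rightarrow> 'e) \<Rightarrow> ('e \<Rightarrow> real)
    \<Rightarrow> ('e \<Rightarrow> real) \<Rightarrow> ('e \<Rightarrow> real) \<Rightarrow> ('e \<Rightarrow> complex) \<Rightarrow> 'e \<Rightarrow> complex" where
  "KW E rv org R c rho \<theta> f e =
     f e - of_real (xw \<theta> e) *
       (\<Sum>e'\<in>{e' \<in> E. org e' = tgt rv org e \<and> e' \<noteq> rv e}.
          exp (\<i> * of_real (alpha rv R c rho e e' / 2)) * f e')"

text \<open>Kasteleyn operator K^omega on C_Gamma: the white vertex psi_W(e) is adjacent to psi_B(e)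
(weight cos theta_e, sign wc e), psi_B(bar e) (weight sin theta_e, sign ws e) and psi_B(R e)
(weight 1, sign wr e).\<close>
definition Kast :: "('e \<Rightarrow> 'e) \<Rightarrow> ('e \<Rightarrow> 'e) \<Rightarrow> ('e \<Rightarrow> real) \<Rightarrow> ('e \<Rightarrow> real) \<Rightarrow> ('e \<Rightarrow> real)
    \<Rightarrow> ('e \<Rightarrow> real) \<Rightarrow> ('e \<Rightarrow> 'a::real_algebra_1) \<Rightarrow> 'e \<Rightarrow> 'a" where
  "Kast rv R \<theta> wc ws wr g e =
     of_real (wc e * cos (\<theta> e)) * g e + of_real (ws e * sin (\<theta> e)) * g (rv e)
     + of_real (wr e) * g (R e)"

text \<open>Kasteleyn condition on the faces of C_Gamma: edge rectangles, vertex polygons (orbits of R),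
face polygons (orbits of rv o R).\<close>
definition kasteleyn :: "'e set \<Rightarrow> ('e \<Rightarrow> 'e) \<Rightarrow> ('e \<Rightarrow> 'e) \<Rightarrow> ('e \<Rightarrow> real) \<Rightarrow> ('e \<Rightarrow> real)
    \<Rightarrow> ('e \<Rightarrow> real) \<Rightarrow> bool" where
  "kasteleyn E rv R wc ws wr \<longleftrightarrow>
     (\<forall>e\<in>E. wc e \<in> {-1, 1} \<and> ws e \<in> {-1, 1} \<and> wr e \<in> {-1, 1}) \<and>
     (\<forall>e\<in>E. wc e * ws e * wc (rv e) * ws (rv e) = -1) \<and>
     (\<forall>e\<in>E. (\<Prod>e'\<in>orbit R e. wc e' * wr e') = (-1) ^ (card (orbit R e) + 1)) \<and>
     (\<forall>e\<in>E. (\<Prod>e'\<in>orbit (rv \<circ> R) e. ws e' * wr e') = (-1) ^ (card (orbit (rv \<circ> R) e) + 1))"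

text \<open>The operator identity KW o (I - qR) o D^{-1/2} o psi_B = (I - i x J) o D^{-1/2} o psi_W o K
on C^B, where Dh e is the chosen square root D_e^{1/2}.\<close>
definition KW_factorization :: "'e set \<Rightarrow> ('e \<Rightarrow> 'e) \<Rightarrow> ('e \<Rightarrow> 'v) \<Rightarrow> ('e \<Rightarrow> 'e) \<Rightarrow> ('e \<Rightarrow> real)
    \<Rightarrow> ('e \<Rightarrow> real) \<Rightarrow> ('e \<Rightarrow> real) \<Rightarrow> ('e \<Rightarrow> complex) \<Rightarrow> ('e \<Rightarrow> real) \<Rightarrow> ('e \<Rightarrow> real)
    \<Rightarrow> ('e \<Rightarrow> real) \<Rightarrow> bool" where
  "KW_factorization E rv org R c rho \<theta> Dh wc ws wr \<longleftrightarrow>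
     (\<forall>g :: 'e \<Rightarrow> complex. \<forall>e\<in>E.
        KW E rv org R c rho \<theta> (\<lambda>e'. g e' / Dh e' - qf rv R c rho e' * (g (R e') / Dh (R e'))) e
        = Kast rv R \<theta> wc ws wr g e / Dh e
          - \<i> * of_real (xw \<theta> e) * (Kast rv R \<theta> wc ws wr g (rv e) / Dh (rv e)))"

definition eps :: "('e \<Rightarrow> 'e) \<Rightarrow> ('e \<Rightarrow> 'e) \<Rightarrow> ('e \<Rightarrow> real) \<Rightarrow> ('e \<Rightarrow> real) \<Rightarrow> ('e \<Rightarrow> complex)
    \<Rightarrow> 'e \<Rightarrow> complex" where
  "eps rv R c rho Dh e = Dh (R e) / (qf rv R c rho e * Dh e)"

definition epsb :: "('e \<Rightarrow> 'e) \<Rightarrow> ('e \<Rightarrow> 'e) \<Rightarrow> ('e \<Rightarrow> real) \<Rightarrow> ('e \<Rightarrow> real) \<Rightarrow> ('e \<Rightarrow> complex)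
    \<Rightarrow> 'e \<Rightarrow> nat \<Rightarrow> complex" where
  "epsb rv R c rho Dh e0 k = (\<Prod>j<k. eps rv R c rho Dh ((R ^^ j) e0))"

text \<open>The spaces C^diamond, L and R^B (functions vanishing off their index sets).\<close>
definition DiamSp :: "'e set \<Rightarrow> ('e \<Rightarrow> 'e) \<Rightarrow> ('e set \<Rightarrow> complex) set" where
  "DiamSp E rv = {F. \<forall>z. z \<notin> Diam E rv \<longrightarrow> F z = 0}"

definition Lsp :: "'e set \<Rightarrow> ('e \<Rightarrow> real) \<Rightarrow> ('e \<Rightarrow> complex) set" where
  "Lsp E a = {f. (\<forall>e\<in>E. \<exists>r::real. f e = exp (- (\<i> * of_real (a e / 2))) * of_real r)
                 \<and> (\<forall>e. e \<notin> E \<longrightarrow> f e = 0)}"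

definition RB :: "'e set \<Rightarrow> ('e \<Rightarrow> real) set" where
  "RB E = {g. \<forall>e. e \<notin> E \<longrightarrow> g e = 0}"

definition Smap :: "'e set \<Rightarrow> ('e \<Rightarrow> 'e) \<Rightarrow> ('e \<Rightarrow> real) \<Rightarrow> ('e \<Rightarrow> real)
    \<Rightarrow> ('e set \<Rightarrow> complex) \<Rightarrow> 'e \<Rightarrow> complex" where
  "Smap E rv \<theta> a F e =
     (if e \<in> E then of_real (sin (\<theta> e / 2)) * Pr (F (zmid rv e)) (exp (- (\<i> * of_real (a e / 2))))
      else 0)"

definition Tmap :: "'e set \<Rightarrow> ('e \<Rightarrow> 'e) \<Rightarrow> ('e \<Rightarrow> 'v) \<Rightarrow> ('e \<Rightarrow> 'e) \<Rightarrow> ('e \<Rightarrow> real)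
    \<Rightarrow> ('e \<Rightarrow> real) \<Rightarrow> ('e \<Rightarrow> real) \<Rightarrow> ('e \<Rightarrow> complex) \<Rightarrow> ('e set \<Rightarrow> complex) \<Rightarrow> 'e \<Rightarrow> real" where
  "Tmap E rv org R c rho \<theta> Dh F e0 =
     (if e0 \<in> E then
        (\<Sum>k<deg E org (org e0).
           Re (epsb rv R c rho Dh e0 k * Dh ((R ^^ k) e0) * of_real (sin (\<theta> ((R ^^ k) e0) / 2))
               * F (zmid rv ((R ^^ k) e0))))
      else 0)"

definition T'map :: "'e set \<Rightarrow> ('e \<Rightarrow> 'e) \<Rightarrow> ('e \<Rightarrow> 'v) \<Rightarrow> ('e \<Rightarrow> 'e) \<Rightarrow> ('e \<Rightarrow> real)
    \<Rightarrow> ('e \<Rightarrow> real) \<Rightarrow> ('e \<Rightarrow> real) \<Rightarrow> ('e \<Rightarrow> complex) \<Rightarrow> ('e set \<Rightarrow> complex) \<Rightarrow> 'e \<Rightarrow> complex" where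
  "T'map E rv org R c rho \<theta> Dh F e0 =
     exp (\<i> * of_real (\<theta> e0 / 2)) * of_real (Tmap E rv org R c rho \<theta> Dh F e0)"

definition rlin_iso :: "(('a \<Rightarrow> 'b::real_vector) \<Rightarrow> ('c \<Rightarrow> 'd::real_vector))
    \<Rightarrow> ('a \<Rightarrow> 'b) set \<Rightarrow> ('c \<Rightarrow> 'd) set \<Rightarrow> bool" where
  "rlin_iso f A B \<longleftrightarrow> bij_betw f A B \<and>
     (\<forall>x\<in>A. \<forall>y\<in>A. f (\<lambda>z. x z + y z) = (\<lambda>w. f x w + f y w)) \<and>
     (\<forall>x\<in>A. \<forall>r::real. f (\<lambda>z. r *\<^sub>R x z) = (\<lambda>w. r *\<^sub>R f x w))"

text \<open>s-holomorphicity around v (square roots [i e^{i phi}]^{-1/2} := e^{-i(pi/2+phi)/2}).\<close>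
definition sholo_at :: "'e set \<Rightarrow> ('e \<Rightarrow> 'e) \<Rightarrow> ('e \<Rightarrow> 'v) \<Rightarrow> ('e \<Rightarrow> 'e) \<Rightarrow> ('e \<Rightarrow> real)
    \<Rightarrow> ('e \<Rightarrow> real) \<Rightarrow> ('e \<Rightarrow> real) \<Rightarrow> ('e \<Rightarrow> real) \<Rightarrow> ('e set \<Rightarrow> complex) \<Rightarrow> 'v \<Rightarrow> bool" where
  "sholo_at E rv org R c rho \<theta> a G v \<longleftrightarrow>
     (\<forall>e\<in>E. org e = v \<longrightarrow>
        Pr (G (zmid rv e)) (exp (- (\<i> * of_real ((pi / 2 + a e + \<theta> e) / 2))))
        = Pr (G (zmid rv (R e))) (exp (- (\<i> * of_real ((pi / 2 + a (R e) - \<theta> (R e)) / 2))))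
          * exp (\<i> * of_real ((beta rv R c rho e - \<theta> e - \<theta> (R e)) / 2)))"

text \<open>Isoradial embedding with critical weights: theta_e is the half-rhombus angle; rhombi are
non-degenerate and all cone angles (at primal vertices and at dual vertices = faces of Gamma,
i.e. orbits of rv o R) are odd multiples of 2 pi.\<close>
definition isoradial :: "'e set \<Rightarrow> ('e \<Rightarrow> 'e) \<Rightarrow> ('e \<Rightarrow> 'v) \<Rightarrow> ('e \<Rightarrow> 'e) \<Rightarrow> ('e \<Rightarrow> real) \<Rightarrow> bool" where
  "isoradial E rv org R \<theta> \<longleftrightarrow>
     (\<forall>e\<in>E. 0 < \<theta> e \<and> \<theta> e < pi / 2) \<and>
     (\<forall>e\<in>E. \<exists>m::int. (\<Sum>e'\<in>Ev E org (org e). 2 * \<theta> e') = 2 * pi * of_int (2 * m + 1)) \<and>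
     (\<forall>e\<in>E. \<exists>m::int. (\<Sum>e'\<in>orbit (rv \<circ> R) e. pi - 2 * \<theta> e') = 2 * pi * of_int (2 * m + 1))"

definition dbar :: "('e \<Rightarrow> 'e) \<Rightarrow> ('e \<Rightarrow> 'e) \<Rightarrow> ('e \<Rightarrow> real) \<Rightarrow> ('e \<Rightarrow> real) \<Rightarrow> ('e \<Rightarrow> real)
    \<Rightarrow> ('e \<Rightarrow> real) \<Rightarrow> ('e \<Rightarrow> complex) \<Rightarrow> 'e \<Rightarrow> complex" where
  "dbar rv R \<theta> wc ws wr g e =
     (let phi1 = of_real (wc e);
          phi2 = - \<i> * of_real (ws e);
          phi3 = - exp (- (\<i> * of_real ((\<theta> e + \<theta> (R e)) / 2))) * of_real (wr e)
      in inverse (of_real (sin (2 * \<theta> e))) *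
         (phi1 * of_real (cos (\<theta> e)) * g e + \<i> * phi2 * of_real (sin (\<theta> e)) * g (rv e)
          - exp (\<i> * of_real (\<theta> e)) * phi3 * g (R e)))"

end

theory Submission
  imports Defs
begin

text \<open>
Write D_e^{1/2} F(z_e) = r_e - i sigma_e r_{bar e} with real coordinates r, where the sign sigma_e
compares D_{bar e}^{1/2} with i D_e^{1/2}. Then S(F)_e = sin(theta_e/2) r_e conj(D_e^{1/2}), and
T(F) is the unique solution of the recursion T(w) - eps(w) T(R w) = 2 sin(theta_w/2) r_w: the signs
eps multiply to -1 around every vertex because the phases q multiply to e^{i pi} there.
In these coordinates both the Kac-Ward equation at bar e and s-holomorphicity at the corner
(e, R e) become real linear identities: the first says that T(F)_e equals the local expression
Tlocal F e, the second that Tlocal F satisfies the recursion of T(F), so by uniqueness both mean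
T(F) = Tlocal F.
The factorization of KW through the Kasteleyn operator turns KW(S F) = 0 into K T(F) = 0, the
2x2 system on e and bar e having determinant 1 + x_e^2. In the isoradial case the spin structure
phi_omega makes dbar(T' F) a nonzero multiple of K T(F) edge by edge.
\<close>

lemma cis_eq_if_cong2pi: "cong2pi x y \<Longrightarrow> cis x = cis y"
proof -
  assume "cong2pi x y"
  then obtain n :: int where "x - y = 2 * pi * of_int n" unfolding cong2pi_def by blast
  then have "x = y + 2 * pi * of_int n" by simp
  then show ?thesis by (simp add: cis_mult[symmetric] cis_multiple_2pi)
qed

lemma exp_i_of_real: "exp (\<i> * complex_of_real x) = cis x"
  by (simp add: cis_conv_exp)

lemma exp_minus_i_of_real: "exp (- (\<i> * complex_of_real x)) = cis (- x)"
  by (simp add: cis_conv_exp)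

lemma cis_eq_cos_sin: "cis x = of_real (cos x) + \<i> * of_real (sin x)"
  by (simp add: complex_eq_iff)

lemma eq_0_if_i_mult_swap:
  fixes A B :: complex
  assumes "A = \<i> * of_real x * B" and "B = \<i> * of_real x * A"
  shows "A = 0"
proof -
  have "A = - (A * (complex_of_real x)\<^sup>2)"
    by (subst assms(1), subst assms(2)) (simp add: power2_eq_square algebra_simps)
  then have "A * complex_of_real (1 + x\<^sup>2) = 0"
    by (simp add: distrib_left) (metis add.left_inverse)
  moreover have "1 + x\<^sup>2 \<noteq> 0" using zero_le_power2[of x] by linarith
  ultimately show ?thesis by (metis mult_eq_0_iff of_real_eq_0_iff)
qed

lemma eq_neg_real_mult_self:
  fixes z :: complex
  assumes "z = - of_real s * z" and "z \<noteq> 0"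
  shows "s = -1"
proof -
  have "of_real (1 + s) * z = 0"
    using assms(1) by (metis add.right_inverse distrib_left minus_equation_iff mult.commute
        mult_1 mult_minus_right of_real_1 of_real_add)
  then have "1 + s = 0"
    using assms(2) by (simp only: mult_eq_0_iff of_real_eq_0_iff) simp
  then show ?thesis by simp
qed

lemma Pr_unit: "cmod u = 1 \<Longrightarrow> Pr z u = of_real (Re (z * cnj u)) * u"
  unfolding Pr_def by simp

lemma Pr_add: "Pr (x + y) u = Pr x u + Pr y u"
  unfolding Pr_def by (simp add: algebra_simps add_divide_distrib)

lemma Pr_of_real_mult: "Pr (complex_of_real t * x) u = complex_of_real t * Pr x u"
  unfolding Pr_def by (simp add: algebra_simps)

lemma funpow_mod_period:
  assumes "(f ^^ p) x = x"
  shows "(f ^^ n) x = (f ^^ (n mod p)) x"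
proof -
  have multiple: "(f ^^ (p * q)) x = x" for q
  proof (induction q)
    case (Suc q)
    have "(f ^^ (p * Suc q)) x = (f ^^ p) ((f ^^ (p * q)) x)"
      by (simp only: mult_Suc_right funpow_add o_apply)
    then show ?case using Suc assms by simp
  qed simp
  have "(f ^^ (n mod p + p * (n div p))) x = (f ^^ (n mod p)) ((f ^^ (p * (n div p))) x)"
    by (simp only: funpow_add o_apply)
  then show ?thesis by (simp only: mod_mult_div_eq multiple)
qed

lemma least_period_orbit:
  assumes "0 < n" and "(f ^^ n) x = x"
  defines "p \<equiv> LEAST p. 0 < p \<and> (f ^^ p) x = x"
  shows "0 < p" and "(f ^^ p) x = x" and "inj_on (\<lambda>k. (f ^^ k) x) {..<p}"
    and "(\<lambda>k. (f ^^ k) x) ` {..<p} = orbit f x"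
proof -
  have p: "0 < p \<and> (f ^^ p) x = x"
    unfolding p_def
    by (rule LeastI[where P = "\<lambda>p. 0 < p \<and> (f ^^ p) x = x"]) (use assms(1,2) in simp)
  then show "0 < p" and period: "(f ^^ p) x = x" by simp_all
  have least: "p \<le> m" if "0 < m" "(f ^^ m) x = x" for m
    unfolding p_def using that by (intro Least_le) simp
  show "inj_on (\<lambda>k. (f ^^ k) x) {..<p}"
  proof (rule linorder_inj_onI')
    fix i j assume "i \<in> {..<p}" "j \<in> {..<p}" "i < j"
    show "(f ^^ i) x \<noteq> (f ^^ j) x"
    proof
      assume eq: "(f ^^ i) x = (f ^^ j) x"
      have "(f ^^ (p - j + i)) x = (f ^^ (p - j)) ((f ^^ j) x)"
        by (simp only: funpow_add o_apply eq)
      also have "\<dots> = (f ^^ (p - j + j)) x"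
        by (simp only: funpow_add o_apply)
      also have "\<dots> = x" using \<open>j \<in> {..<p}\<close> period by simp
      finally have "p \<le> p - j + i"
        using \<open>i < j\<close> \<open>j \<in> {..<p}\<close> by (intro least) simp_all
      then show False using \<open>i < j\<close> \<open>j \<in> {..<p}\<close> by simp
    qed
  qed
  show "(\<lambda>k. (f ^^ k) x) ` {..<p} = orbit f x"
  proof
    show "orbit f x \<subseteq> (\<lambda>k. (f ^^ k) x) ` {..<p}"
    proof
      fix y assume "y \<in> orbit f x"
      then obtain k where "y = (f ^^ k) x" unfolding orbit_def by blast
      then have "y = (f ^^ (k mod p)) x" using funpow_mod_period[OF period, of k] by (rule trans)
      moreover have "k mod p < p" using p by simp
      ultimately show "y \<in> (\<lambda>k. (f ^^ k) x) ` {..<p}" by blast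
    qed
  qed (unfold orbit_def, blast)
qed

lemma KW_cong:
  assumes "\<forall>x\<in>E. f x = g x" and "e \<in> E"
  shows "KW E rv org R c rho \<theta> f e = KW E rv org R c rho \<theta> g e"
  unfolding KW_def using assms by (auto intro!: sum.cong)

lemma KW_const_mult: "KW E rv org R c rho \<theta> (\<lambda>x. k * f x) e = k * KW E rv org R c rho \<theta> f e"
  unfolding KW_def by (simp add: sum_distrib_left algebra_simps)

lemma Kast_of_real:
  "Kast rv R \<theta> wc ws wr (\<lambda>x. complex_of_real (g x)) e = complex_of_real (Kast rv R \<theta> wc ws wr g e)"
  unfolding Kast_def by simp

lemma Smap_add: "Smap E rv \<theta> a (\<lambda>z. x z + y z) = (\<lambda>w. Smap E rv \<theta> a x w + Smap E rv \<theta> a y w)"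
  by (rule ext) (simp add: Smap_def Pr_add algebra_simps)

lemma Smap_scaleR: "Smap E rv \<theta> a (\<lambda>z. t *\<^sub>R x z) = (\<lambda>w. t *\<^sub>R Smap E rv \<theta> a x w)"
  by (rule ext) (simp add: Smap_def scaleR_conv_of_real Pr_of_real_mult algebra_simps)

lemma Tmap_add: "Tmap E rv org R c rho \<theta> Dh (\<lambda>z. x z + y z)
    = (\<lambda>w. Tmap E rv org R c rho \<theta> Dh x w + Tmap E rv org R c rho \<theta> Dh y w)"
  by (rule ext) (auto simp add: Tmap_def distrib_left sum.distrib)

lemma Tmap_scaleR:
  "Tmap E rv org R c rho \<theta> Dh (\<lambda>z. t *\<^sub>R x z) = (\<lambda>w. t *\<^sub>R Tmap E rv org R c rho \<theta> Dh x w)"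
proof
  have Re_mult: "Re (u * (complex_of_real t * v)) = t * Re (u * v)" for u v
    by (simp add: mult.left_commute[of u])
  show "Tmap E rv org R c rho \<theta> Dh (\<lambda>z. t *\<^sub>R x z) w = t *\<^sub>R Tmap E rv org R c rho \<theta> Dh x w" for w
    unfolding Tmap_def scaleR_conv_of_real Re_mult real_scaleR_def
    by (simp only: if_distrib sum_distrib_left) simp
qed

lemma T'map_add: "T'map E rv org R c rho \<theta> Dh (\<lambda>z. x z + y z)
    = (\<lambda>w. T'map E rv org R c rho \<theta> Dh x w + T'map E rv org R c rho \<theta> Dh y w)"
  unfolding T'map_def Tmap_add by (simp add: algebra_simps)

lemma T'map_scaleR:
  "T'map E rv org R c rho \<theta> Dh (\<lambda>z. t *\<^sub>R x z) = (\<lambda>w. t *\<^sub>R T'map E rv org R c rho \<theta> Dh x w)"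
  unfolding T'map_def Tmap_scaleR by (simp add: scaleR_conv_of_real algebra_simps)

lemma dbar_phase_of_real:
  fixes t :: "'e \<Rightarrow> real"
  assumes "\<theta> (rv e) = \<theta> e"
  shows "dbar rv R \<theta> wc ws wr (\<lambda>x. exp (\<i> * of_real (\<theta> x / 2)) * of_real (t x)) e
    = inverse (of_real (sin (2 * \<theta> e))) * (cis (\<theta> e / 2) * of_real (Kast rv R \<theta> wc ws wr t e))"
proof -
  have corner: "cis (\<theta> e) * cis (- ((\<theta> e + \<theta> (R e)) / 2)) * cis (\<theta> (R e) / 2) = cis (\<theta> e / 2)"
    by (simp only: cis_mult) (rule arg_cong[where f = cis], simp add: field_simps)
  have "dbar rv R \<theta> wc ws wr (\<lambda>x. exp (\<i> * of_real (\<theta> x / 2)) * of_real (t x)) e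
     = inverse (of_real (sin (2 * \<theta> e))) *
       (of_real (wc e) * of_real (cos (\<theta> e)) * (cis (\<theta> e / 2) * of_real (t e))
        + \<i> * (- \<i> * of_real (ws e)) * of_real (sin (\<theta> e)) * (cis (\<theta> e / 2) * of_real (t (rv e)))
        + (cis (\<theta> e) * cis (- ((\<theta> e + \<theta> (R e)) / 2)) * cis (\<theta> (R e) / 2)) * of_real (wr e * t (R e)))"
    unfolding dbar_def Let_def exp_i_of_real exp_minus_i_of_real assms
    by (simp only: of_real_mult mult_minus_left mult_minus_right diff_minus_eq_add ac_simps)
  also have "\<dots> = inverse (of_real (sin (2 * \<theta> e))) * (cis (\<theta> e / 2) * of_real (Kast rv R \<theta> wc ws wr t e))"
    unfolding corner Kast_def by (simp add: algebra_simps)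
  finally show ?thesis .
qed

section \<open>Rotation systems with square roots of the phases D\<close>

locale kw_setting =
  fixes E :: "'e set" and rv R :: "'e \<Rightarrow> 'e" and org :: "'e \<Rightarrow> 'v"
    and \<theta> a rho c :: "'e \<Rightarrow> real" and Dh :: "'e \<Rightarrow> complex"
  assumes graph: "rotation_system E rv org R"
    and weights: "weights_ok E rv \<theta>"
    and angles: "angle_data E rv org R c rho a"
    and Dh_square: "\<forall>e\<in>E. Dh e ^ 2 = exp (\<i> * of_real (a e))"
begin

lemma rv_in: "e \<in> E \<Longrightarrow> rv e \<in> E"
  and rv_rv [simp]: "e \<in> E \<Longrightarrow> rv (rv e) = e"
  and R_in: "e \<in> E \<Longrightarrow> R e \<in> E"
  and org_R [simp]: "e \<in> E \<Longrightarrow> org (R e) = org e"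
  and orbit_R: "e \<in> E \<Longrightarrow> orbit R e = Ev E org (org e)"
  using graph unfolding rotation_system_def by blast+

lemma funpow_R_in: "e \<in> E \<Longrightarrow> (R ^^ k) e \<in> E"
  by (induction k) (auto intro: R_in)

lemma zmid_rv: "zmid rv (rv e) = zmid rv e" if "e \<in> E"
  using that unfolding zmid_def by auto

lemma c_sum: "e \<in> E \<Longrightarrow> (\<Sum>e'\<in>Ev E org (org e). c e') = 2 * pi"
  and a_rv: "e \<in> E \<Longrightarrow> cong2pi (a (rv e)) (a e + pi)"
  and a_R: "e \<in> E \<Longrightarrow> cong2pi (a (R e) + rho (rv (R e))) (a e + rho (rv e) + c e)"
  using angles unfolding angle_data_def by blast+

lemma \<theta>_pos: "e \<in> E \<Longrightarrow> 0 < \<theta> e"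
  and \<theta>_le: "e \<in> E \<Longrightarrow> \<theta> e \<le> pi / 2"
  and \<theta>_rv: "e \<in> E \<Longrightarrow> \<theta> (rv e) = \<theta> e"
  using weights unfolding weights_ok_def by blast+

lemma sin_half_\<theta>_pos: "0 < sin (\<theta> e / 2)"
  and cos_half_\<theta>_pos: "0 < cos (\<theta> e / 2)" if "e \<in> E"
  using \<theta>_pos[OF that] \<theta>_le[OF that] by (auto intro!: sin_gt_zero cos_gt_zero_pi)

abbreviation d :: "'e \<Rightarrow> nat" where
  "d e \<equiv> deg E org (org e)"

lemma vertex_cycle:
  assumes w: "w \<in> E"
  shows "0 < d w" and "(R ^^ d w) w = w" and "inj_on (\<lambda>k. (R ^^ k) w) {..<d w}"
    and "(\<lambda>k. (R ^^ k) w) ` {..<d w} = Ev E org (org w)"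
proof -
  have "w \<in> orbit R (R w)"
    using w orbit_R[OF R_in[OF w]] by (simp add: Ev_def)
  then obtain k where "w = (R ^^ k) (R w)"
    unfolding orbit_def by blast
  then have "(R ^^ Suc k) w = w"
    by (simp add: funpow_Suc_right del: funpow.simps)
  note period = least_period_orbit[of "Suc k" R w, OF zero_less_Suc this]
  moreover have "d w = (LEAST p. 0 < p \<and> (R ^^ p) w = w)"
    unfolding deg_def using card_image[OF period(3)] period(4) orbit_R[OF w] by simp
  ultimately show "0 < d w" and "(R ^^ d w) w = w" and "inj_on (\<lambda>k. (R ^^ k) w) {..<d w}"
    and "(\<lambda>k. (R ^^ k) w) ` {..<d w} = Ev E org (org w)"
    using orbit_R[OF w] by simp_all
qed

lemma corner_idx_R: "corner_idx R w (R w) = 1"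
  unfolding corner_idx_def by (rule Least_equality) auto

lemma corner_idx_funpow_R:
  assumes w: "w \<in> E" and k: "0 < k" "k < d w"
  shows "corner_idx R w ((R ^^ k) w) = k"
  unfolding corner_idx_def
proof (rule Least_equality)
  show "0 < k \<and> (R ^^ k) w = (R ^^ k) w" using k by simp
  fix j assume j: "0 < j \<and> (R ^^ j) w = (R ^^ k) w"
  show "k \<le> j"
  proof (rule ccontr)
    assume "\<not> k \<le> j"
    then have "j = k"
      using j k vertex_cycle(3)[OF w] unfolding inj_on_def by simp
    then show False using \<open>\<not> k \<le> j\<close> by simp
  qed
qed

lemma sum_c_vertex_cycle: "(\<Sum>j<d w. c ((R ^^ j) w)) = 2 * pi" if w: "w \<in> E"
  using sum.reindex[OF vertex_cycle(3)[OF w], of c] vertex_cycle(4)[OF w] c_sum[OF w] by simp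

lemma Dh_square_cis: "e \<in> E \<Longrightarrow> Dh e ^ 2 = cis (a e)"
  using Dh_square by (simp add: exp_i_of_real)

lemma norm_Dh: "e \<in> E \<Longrightarrow> cmod (Dh e) = 1"
proof -
  assume "e \<in> E"
  then have "cmod (Dh e) ^ 2 = 1"
    using Dh_square_cis by (metis norm_cis norm_power)
  then show ?thesis by (simp add: power2_eq_1_iff) (smt (verit) norm_ge_zero)
qed

lemma Dh_mult_cnj: "e \<in> E \<Longrightarrow> Dh e * cnj (Dh e) = 1"
  using norm_Dh by (metis complex_norm_square mult.commute of_real_1 power_one)

lemma Dh_nonzero: "e \<in> E \<Longrightarrow> Dh e \<noteq> 0"
  using norm_Dh by force

lemma inverse_Dh: "e \<in> E \<Longrightarrow> inverse (Dh e) = cnj (Dh e)"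
  using Dh_mult_cnj by (metis inverse_unique)

text \<open>Each of the following signs compares two square roots of the same unit complex number.\<close>

definition rev_sign :: "'e \<Rightarrow> real" where
  "rev_sign e = (if Dh (rv e) = \<i> * Dh e then 1 else -1)"

definition half_sign :: "'e \<Rightarrow> real" where
  "half_sign e = (if cis (a e / 2) = Dh e then 1 else -1)"

abbreviation q :: "'e \<Rightarrow> complex" where
  "q \<equiv> qf rv R c rho"

definition rot_sign :: "'e \<Rightarrow> real" where
  "rot_sign e = (if Dh (R e) = q e * Dh e then 1 else -1)"

lemma rev_sign_square [simp]: "rev_sign e * rev_sign e = 1"
  and half_sign_square [simp]: "half_sign e * half_sign e = 1"
  and rot_sign_square [simp]: "rot_sign e * rot_sign e = 1"
  by (simp_all add: rev_sign_def half_sign_def rot_sign_def)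

lemma half_sign_nonzero [simp]: "half_sign e \<noteq> 0"
  by (simp add: half_sign_def)

lemma Dh_rv: "e \<in> E \<Longrightarrow> Dh (rv e) = \<i> * of_real (rev_sign e) * Dh e"
proof -
  assume e: "e \<in> E"
  have "Dh (rv e) ^ 2 = cis (a e + pi)"
    using Dh_square_cis[OF rv_in[OF e]] cis_eq_if_cong2pi[OF a_rv[OF e]] by simp
  also have "\<dots> = (\<i> * Dh e) ^ 2"
    using Dh_square_cis[OF e] by (simp add: cis_mult[symmetric] power_mult_distrib)
  finally show ?thesis
    unfolding rev_sign_def power2_eq_iff by auto
qed

lemma rev_sign_rv: "e \<in> E \<Longrightarrow> rev_sign (rv e) = - rev_sign e"
proof -
  assume e: "e \<in> E"
  have "Dh e = - of_real (rev_sign (rv e) * rev_sign e) * Dh e"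
    using Dh_rv[OF rv_in[OF e]] Dh_rv[OF e] e by (simp add: algebra_simps)
  then have prod: "rev_sign (rv e) * rev_sign e = -1"
    using Dh_nonzero[OF e] by (rule eq_neg_real_mult_self)
  have "rev_sign (rv e) = rev_sign (rv e) * (rev_sign e * rev_sign e)" by simp
  also have "\<dots> = - rev_sign e" using prod by (simp only: mult.assoc[symmetric])
  finally show ?thesis .
qed

lemma cis_half_a: "e \<in> E \<Longrightarrow> cis (a e / 2) = of_real (half_sign e) * Dh e"
proof -
  assume e: "e \<in> E"
  have "cis (a e / 2) ^ 2 = Dh e ^ 2"
    using Dh_square_cis[OF e] by (simp add: DeMoivre)
  then show ?thesis
    unfolding half_sign_def power2_eq_iff by auto
qed

lemma exp_minus_half_a: "e \<in> E \<Longrightarrow> exp (- (\<i> * of_real (a e / 2))) = of_real (half_sign e) * cnj (Dh e)"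
  using cis_half_a by (metis cis_cnj complex_cnj_complex_of_real complex_cnj_mult exp_minus_i_of_real)

lemma q_cis: "q w = cis (beta rv R c rho w / 2)"
  by (simp only: qf_def cis_conv_exp)

lemma beta_eq: "w \<in> E \<Longrightarrow> beta rv R c rho w = rho (rv w) - rho (rv (R w)) + c w"
  unfolding beta_def alpha_def by (simp add: corner_idx_R)

lemma Dh_R: "w \<in> E \<Longrightarrow> Dh (R w) = of_real (rot_sign w) * q w * Dh w"
proof -
  assume w: "w \<in> E"
  have "cong2pi (a (R w)) (a w + rho (rv w) + c w - rho (rv (R w)))"
    using a_R[OF w] unfolding cong2pi_def by (simp add: algebra_simps)
  then have "Dh (R w) ^ 2 = cis (a w + rho (rv w) + c w - rho (rv (R w)))"
    using Dh_square_cis[OF R_in[OF w]] cis_eq_if_cong2pi by simp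
  also have "\<dots> = cis (beta rv R c rho w + a w)"
    using w by (simp add: beta_eq algebra_simps)
  also have "\<dots> = (q w * Dh w) ^ 2"
    using Dh_square_cis[OF w] by (simp add: q_cis power_mult_distrib DeMoivre cis_mult)
  finally show ?thesis
    unfolding rot_sign_def power2_eq_iff by auto
qed

lemma eps_eq_rot_sign: "w \<in> E \<Longrightarrow> eps rv R c rho Dh w = of_real (rot_sign w)"
  using Dh_R[of w] Dh_nonzero[of w] unfolding eps_def by (simp add: q_cis cis_neq_zero)

definition rot_sign_prod :: "'e \<Rightarrow> nat \<Rightarrow> real" where
  "rot_sign_prod w k = (\<Prod>j<k. rot_sign ((R ^^ j) w))"

lemma epsb_eq_rot_sign_prod: "w \<in> E \<Longrightarrow> epsb rv R c rho Dh w k = of_real (rot_sign_prod w k)"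
  unfolding epsb_def rot_sign_prod_def by (simp add: eps_eq_rot_sign funpow_R_in)

lemma rot_sign_prod_Suc: "rot_sign_prod w (Suc k) = rot_sign_prod w k * rot_sign ((R ^^ k) w)"
  by (simp add: rot_sign_prod_def)

lemma rot_sign_prod_Suc_shift: "rot_sign_prod w (Suc k) = rot_sign w * rot_sign_prod (R w) k"
  unfolding rot_sign_prod_def
  by (simp only: prod.lessThan_Suc_shift) (simp add: funpow_Suc_right del: funpow.simps)

lemma Dh_funpow_R:
  assumes w: "w \<in> E"
  shows "Dh ((R ^^ k) w)
    = of_real (rot_sign_prod w k) * cis ((rho (rv w) - rho (rv ((R ^^ k) w)) + (\<Sum>j<k. c ((R ^^ j) w))) / 2) * Dh w"
proof (induction k)
  case (Suc k)
  let ?\<phi> = "rho (rv w) - rho (rv ((R ^^ k) w)) + (\<Sum>j<k. c ((R ^^ j) w))"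
  let ?\<psi> = "rho (rv ((R ^^ k) w)) - rho (rv ((R ^^ Suc k) w)) + c ((R ^^ k) w)"
  have "q ((R ^^ k) w) = cis (?\<psi> / 2)"
    using funpow_R_in[OF w] by (simp add: q_cis beta_eq)
  then have "Dh ((R ^^ Suc k) w) = of_real (rot_sign_prod w (Suc k)) * (cis (?\<phi> / 2) * cis (?\<psi> / 2)) * Dh w"
    using Dh_R[OF funpow_R_in[OF w]] Suc by (simp add: rot_sign_prod_Suc mult_ac)
  also have "cis (?\<phi> / 2) * cis (?\<psi> / 2)
      = cis ((rho (rv w) - rho (rv ((R ^^ Suc k) w)) + (\<Sum>j<Suc k. c ((R ^^ j) w))) / 2)"
    by (simp only: cis_mult) (rule arg_cong[where f = cis], simp add: field_simps)
  finally show ?case .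
qed (simp add: rot_sign_prod_def)

text \<open>Going once around a vertex, the factors q multiply to cis(pi) = -1 since the corner angles
sum to 2 pi, while D^{1/2} returns to itself.\<close>

lemma rot_sign_prod_cycle: "w \<in> E \<Longrightarrow> rot_sign_prod w (d w) = -1"
proof -
  assume w: "w \<in> E"
  have "Dh w = - of_real (rot_sign_prod w (d w)) * Dh w"
    using Dh_funpow_R[OF w, of "d w"] vertex_cycle(2)[OF w] sum_c_vertex_cycle[OF w] by simp
  then show ?thesis
    using Dh_nonzero[OF w] by (rule eq_neg_real_mult_self)
qed

subsection \<open>Real coordinates and the maps S and T\<close>

text \<open>The real part of D_e^{1/2} F(z_e); its imaginary part is, up to the sign rev_sign e, the
coordinate at the reversed edge (Dh_mult_F).\<close>

definition coord :: "('e set \<Rightarrow> complex) \<Rightarrow> 'e \<Rightarrow> real" where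
  "coord F e = Re (Dh e * F (zmid rv e))"

lemma Dh_mult_F:
  assumes e: "e \<in> E"
  shows "Dh e * F (zmid rv e) = of_real (coord F e) - \<i> * of_real (rev_sign e * coord F (rv e))"
proof -
  have "coord F (rv e) = - rev_sign e * Im (Dh e * F (zmid rv e))"
    unfolding coord_def using e by (simp add: zmid_rv Dh_rv mult.assoc)
  then have "rev_sign e * coord F (rv e) = - Im (Dh e * F (zmid rv e))"
    by (simp add: mult.assoc[symmetric])
  then show ?thesis unfolding coord_def by (simp add: complex_eq_iff)
qed

lemma coord_inj:
  assumes "F \<in> DiamSp E rv" and "G \<in> DiamSp E rv" and "\<forall>e\<in>E. coord F e = coord G e"
  shows "F = G"
proof
  fix z show "F z = G z"
  proof (cases "z \<in> Diam E rv")
    case True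
    then obtain e where e: "e \<in> E" and z: "z = zmid rv e" unfolding Diam_def by blast
    have "Dh e * F z = Dh e * G z"
      using Dh_mult_F[OF e, of F] Dh_mult_F[OF e, of G] assms(3) e rv_in[OF e] z by simp
    then show ?thesis using Dh_nonzero[OF e] by simp
  next
    case False
    then show ?thesis using assms(1,2) unfolding DiamSp_def by simp
  qed
qed

definition of_coord :: "('e \<Rightarrow> real) \<Rightarrow> 'e set \<Rightarrow> complex" where
  "of_coord \<rho> z = (if z \<in> Diam E rv then
     (let e = SOME e. e \<in> E \<and> z = zmid rv e in
        (of_real (\<rho> e) - \<i> * of_real (rev_sign e * \<rho> (rv e))) * cnj (Dh e))
   else 0)"

lemma of_coord_in_DiamSp: "of_coord \<rho> \<in> DiamSp E rv"
  unfolding DiamSp_def of_coord_def by auto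

lemma of_coord_zmid:
  assumes e: "e \<in> E"
  shows "of_coord \<rho> (zmid rv e) = (of_real (\<rho> e) - \<i> * of_real (rev_sign e * \<rho> (rv e))) * cnj (Dh e)"
proof -
  define e0 where "e0 = (SOME e0. e0 \<in> E \<and> zmid rv e = zmid rv e0)"
  have "e0 \<in> E \<and> zmid rv e = zmid rv e0"
    unfolding e0_def by (rule someI[of _ e]) (use e in simp)
  then have "e0 = e \<or> e0 = rv e"
    unfolding zmid_def by (metis doubleton_eq_iff)
  moreover have "of_coord \<rho> (zmid rv e)
      = (of_real (\<rho> e0) - \<i> * of_real (rev_sign e0 * \<rho> (rv e0))) * cnj (Dh e0)"
    unfolding of_coord_def e0_def using e by (auto simp: Diam_def Let_def)
  moreover have "cnj (Dh (rv e)) = - \<i> * of_real (rev_sign e) * cnj (Dh e)"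
    using Dh_rv[OF e] by simp
  moreover have "complex_of_real (rev_sign e) * of_real (rev_sign e) = 1"
    by (simp flip: of_real_mult)
  ultimately show ?thesis
    using e by (auto simp: rev_sign_rv algebra_simps)
qed

lemma coord_of_coord: "e \<in> E \<Longrightarrow> coord (of_coord \<rho>) e = \<rho> e"
  unfolding coord_def by (simp add: of_coord_zmid mult.left_commute[of "Dh e"] Dh_mult_cnj)

lemma Smap_eq:
  assumes e: "e \<in> E"
  shows "Smap E rv \<theta> a F e = of_real (sin (\<theta> e / 2) * coord F e) * cnj (Dh e)"
proof -
  let ?u = "of_real (half_sign e) * cnj (Dh e)"
  have "cmod ?u = 1"
    using norm_Dh[OF e] by (simp add: norm_mult half_sign_def)
  then have "Pr (F (zmid rv e)) ?u = of_real (half_sign e * coord F e) * ?u"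
    unfolding coord_def by (simp add: Pr_unit algebra_simps)
  also have "\<dots> = of_real (coord F e) * cnj (Dh e)"
    by (simp add: mult_ac flip: of_real_mult)
  finally show ?thesis
    unfolding Smap_def exp_minus_half_a[OF e] using e by simp
qed

abbreviation T :: "('e set \<Rightarrow> complex) \<Rightarrow> 'e \<Rightarrow> real" where
  "T F \<equiv> Tmap E rv org R c rho \<theta> Dh F"

definition weighted_coord :: "('e set \<Rightarrow> complex) \<Rightarrow> 'e \<Rightarrow> real" where
  "weighted_coord F e = sin (\<theta> e / 2) * coord F e"

lemma Tmap_eq_sum:
  "w \<in> E \<Longrightarrow> T F w = (\<Sum>k<d w. rot_sign_prod w k * weighted_coord F ((R ^^ k) w))"
  unfolding Tmap_def weighted_coord_def
  by (auto simp: epsb_eq_rot_sign_prod coord_def algebra_simps intro!: sum.cong)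

text \<open>T(F)(w) - eps(w) T(F)(R w) telescopes to twice the first summand, the boundary term
being turned by the sign product -1 around the vertex.\<close>

lemma Tmap_rec:
  assumes w: "w \<in> E"
  shows "T F w - rot_sign w * T F (R w) = 2 * weighted_coord F w"
proof -
  have "rot_sign w * T F (R w) = (\<Sum>k<d w. rot_sign_prod w (Suc k) * weighted_coord F ((R ^^ Suc k) w))"
    using Tmap_eq_sum[OF R_in[OF w]] w
    by (simp add: sum_distrib_left rot_sign_prod_Suc_shift funpow_Suc_right mult.assoc del: funpow.simps)
  also have "\<dots> = (\<Sum>k<Suc (d w). rot_sign_prod w k * weighted_coord F ((R ^^ k) w)) - weighted_coord F w"
    by (simp only: sum.lessThan_Suc_shift) (simp add: rot_sign_prod_def)
  also have "\<dots> = T F w - 2 * weighted_coord F w"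
    using Tmap_eq_sum[OF w] rot_sign_prod_cycle[OF w] vertex_cycle(2)[OF w] by simp
  finally show ?thesis by simp
qed

lemma eq_0_if_rot_sign_invariant:
  assumes inv: "\<forall>e\<in>E. D e = rot_sign e * D (R e)" and w: "w \<in> E"
  shows "D w = 0"
proof -
  have "D w = rot_sign_prod w k * D ((R ^^ k) w)" for k
  proof (induction k)
    case (Suc k)
    then show ?case
      using inv funpow_R_in[OF w, of k] by (simp add: rot_sign_prod_Suc mult.assoc)
  qed (simp add: rot_sign_prod_def)
  from this[of "d w"] have "D w = - D w"
    using rot_sign_prod_cycle[OF w] vertex_cycle(2)[OF w] by simp
  then show ?thesis by simp
qed

lemma Tmap_unique:
  assumes "\<forall>e\<in>E. h e - rot_sign e * h (R e) = 2 * weighted_coord F e" and "w \<in> E"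
  shows "h w = T F w"
proof -
  have "\<forall>e\<in>E. h e - T F e = rot_sign e * (h (R e) - T F (R e))"
    using assms(1) Tmap_rec by (simp add: algebra_simps)
  then show ?thesis
    using eq_0_if_rot_sign_invariant[of "\<lambda>e. h e - T F e", OF _ assms(2)] by simp
qed

subsection \<open>Kac-Ward equation and s-holomorphicity\<close>

lemma KW_neighbours:
  assumes e: "e \<in> E"
  shows "{e' \<in> E. org e' = tgt rv org e \<and> e' \<noteq> rv e} = (\<lambda>k. (R ^^ k) (rv e)) ` {1..<d (rv e)}"
proof -
  have u: "rv e \<in> E" using rv_in[OF e] .
  have "{e' \<in> E. org e' = tgt rv org e \<and> e' \<noteq> rv e} = (\<lambda>k. (R ^^ k) (rv e)) ` {..<d (rv e)} - {rv e}"
    unfolding vertex_cycle(4)[OF u] Ev_def tgt_def by auto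
  also have "\<dots> = (\<lambda>k. (R ^^ k) (rv e)) ` ({..<d (rv e)} - {0})"
    using vertex_cycle(1,3)[OF u] by (subst inj_on_image_set_diff) auto
  also have "{..<d (rv e)} - {0} = {1..<d (rv e)}" by auto
  finally show ?thesis .
qed

text \<open>In the Kac-Ward sum the phases of alpha cancel against those of D^{1/2} along the corners
at t(e); only the signs survive.\<close>

lemma KW_summand:
  assumes e: "e \<in> E" and k: "k \<in> {1..<d (rv e)}"
  defines "f \<equiv> (R ^^ k) (rv e)"
  shows "exp (\<i> * of_real (alpha rv R c rho e f / 2)) * Smap E rv \<theta> a F f
    = - cnj (Dh e) * of_real (rev_sign e * rot_sign_prod (rv e) k * weighted_coord F f)"
proof -
  let ?\<phi> = "rho (rv (rv e)) - rho (rv f) + (\<Sum>j<k. c ((R ^^ j) (rv e)))"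
  have f: "f \<in> E" unfolding f_def by (rule funpow_R_in[OF rv_in[OF e]])
  have "corner_idx R (rv e) f = k"
    unfolding f_def using corner_idx_funpow_R[OF rv_in[OF e]] k by simp
  then have "alpha rv R c rho e f / 2 = ?\<phi> / 2 + - (pi / 2)"
    unfolding alpha_def using e by (simp add: field_simps)
  then have "exp (\<i> * of_real (alpha rv R c rho e f / 2)) = cis (?\<phi> / 2) * cis (- (pi / 2))"
    by (simp only: exp_i_of_real cis_mult)
  then have phase: "exp (\<i> * of_real (alpha rv R c rho e f / 2)) = - \<i> * cis (?\<phi> / 2)"
    by simp
  have "cnj (Dh f) = of_real (rot_sign_prod (rv e) k) * cnj (cis (?\<phi> / 2)) * (- \<i> * of_real (rev_sign e) * cnj (Dh e))"
    using Dh_funpow_R[OF rv_in[OF e], of k] Dh_rv[OF e] unfolding f_def by simp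
  moreover have "cis (?\<phi> / 2) * cnj (cis (?\<phi> / 2)) = 1"
    by (simp add: cis_cnj cis_mult)
  ultimately show ?thesis
    unfolding phase Smap_eq[OF f] weighted_coord_def by (simp add: algebra_simps)
qed

lemma KW_Smap:
  assumes e: "e \<in> E"
  shows "KW E rv org R c rho \<theta> (Smap E rv \<theta> a F) e = cnj (Dh e)
    * of_real (weighted_coord F e + xw \<theta> e * rev_sign e * (T F (rv e) - weighted_coord F (rv e)))"
proof -
  have u: "rv e \<in> E" by (rule rv_in[OF e])
  have inj: "inj_on (\<lambda>k. (R ^^ k) (rv e)) {1..<d (rv e)}"
    using vertex_cycle(3)[OF u] by (rule inj_on_subset) auto
  have "(\<Sum>e'\<in>{e' \<in> E. org e' = tgt rv org e \<and> e' \<noteq> rv e}.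
          exp (\<i> * of_real (alpha rv R c rho e e' / 2)) * Smap E rv \<theta> a F e')
      = (\<Sum>k\<in>{1..<d (rv e)}. - cnj (Dh e)
          * of_real (rev_sign e * rot_sign_prod (rv e) k * weighted_coord F ((R ^^ k) (rv e))))"
    unfolding KW_neighbours[OF e] sum.reindex[OF inj] using KW_summand[OF e] by simp
  also have "\<dots> = - cnj (Dh e) * of_real (rev_sign e
      * (\<Sum>k\<in>{1..<d (rv e)}. rot_sign_prod (rv e) k * weighted_coord F ((R ^^ k) (rv e))))"
    by (simp add: sum_distrib_left mult.assoc)
  also have "(\<Sum>k\<in>{1..<d (rv e)}. rot_sign_prod (rv e) k * weighted_coord F ((R ^^ k) (rv e)))
      = T F (rv e) - weighted_coord F (rv e)"
  proof -
    have "{..<d (rv e)} = insert 0 {1..<d (rv e)}" using vertex_cycle(1)[OF u] by auto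
    then show ?thesis using Tmap_eq_sum[OF u] by (simp add: rot_sign_prod_def)
  qed
  finally have sum: "(\<Sum>e'\<in>{e' \<in> E. org e' = tgt rv org e \<and> e' \<noteq> rv e}.
          exp (\<i> * of_real (alpha rv R c rho e e' / 2)) * Smap E rv \<theta> a F e')
      = - cnj (Dh e) * of_real (rev_sign e * (T F (rv e) - weighted_coord F (rv e)))" .
  show ?thesis
    unfolding KW_def sum Smap_eq[OF e] weighted_coord_def[symmetric] by (simp add: algebra_simps)
qed

definition Tlocal :: "('e set \<Rightarrow> complex) \<Rightarrow> 'e \<Rightarrow> real" where
  "Tlocal F e = weighted_coord F e + rev_sign e * cos (\<theta> e / 2) * coord F (rv e)"

lemma KW_Smap_rv_eq_0_iff:
  assumes e: "e \<in> E"
  shows "KW E rv org R c rho \<theta> (Smap E rv \<theta> a F) (rv e) = 0 \<longleftrightarrow> T F e = Tlocal F e"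
proof -
  note s = sin_half_\<theta>_pos[OF e] and co = cos_half_\<theta>_pos[OF e]
  have "KW E rv org R c rho \<theta> (Smap E rv \<theta> a F) (rv e) = 0
      \<longleftrightarrow> weighted_coord F (rv e) + xw \<theta> (rv e) * rev_sign (rv e) * (T F e - weighted_coord F e) = 0"
    using Dh_nonzero[OF rv_in[OF e]]
    by (simp only: KW_Smap[OF rv_in[OF e]] rv_rv[OF e] mult_eq_0_iff of_real_eq_0_iff
        complex_cnj_zero_iff simp_thms)
  also have "\<dots> \<longleftrightarrow> sin (\<theta> e / 2) * coord F (rv e)
      - sin (\<theta> e / 2) / cos (\<theta> e / 2) * rev_sign e * (T F e - weighted_coord F e) = 0"
    using e by (simp add: weighted_coord_def xw_def tan_def \<theta>_rv rev_sign_rv)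
  also have "\<dots> \<longleftrightarrow> cos (\<theta> e / 2) * coord F (rv e) = rev_sign e * (T F e - weighted_coord F e)"
  proof -
    have "sin (\<theta> e / 2) * coord F (rv e)
        - sin (\<theta> e / 2) / cos (\<theta> e / 2) * rev_sign e * (T F e - weighted_coord F e)
      = sin (\<theta> e / 2) / cos (\<theta> e / 2)
        * (cos (\<theta> e / 2) * coord F (rv e) - rev_sign e * (T F e - weighted_coord F e))"
      using co by (simp add: field_simps)
    then show ?thesis using s co by simp
  qed
  also have "\<dots> \<longleftrightarrow> T F e = Tlocal F e"
    using rev_sign_def[of e] unfolding Tlocal_def by (auto simp: algebra_simps split: if_splits)
  finally show ?thesis .
qed

lemma KW_Smap_eq_0_iff:
  "(\<forall>e\<in>E. KW E rv org R c rho \<theta> (Smap E rv \<theta> a F) e = 0) \<longleftrightarrow> (\<forall>e\<in>E. T F e = Tlocal F e)"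
  using KW_Smap_rv_eq_0_iff rv_in rv_rv by metis

lemma Re_rotated_F:
  assumes e: "e \<in> E"
  shows "Re (cis (pi / 4) * F (zmid rv e) * cis ((pi / 2 + a e + \<phi>) / 2))
    = half_sign e * (rev_sign e * coord F (rv e) * cos (\<phi> / 2) - coord F e * sin (\<phi> / 2))"
proof -
  have "cis (pi / 4) * cis ((pi / 2 + a e + \<phi>) / 2) = cis (pi / 2) * cis (a e / 2) * cis (\<phi> / 2)"
    by (simp only: cis_mult) (rule arg_cong[where f = cis], simp add: field_simps)
  also have "\<dots> = \<i> * of_real (half_sign e) * Dh e * cis (\<phi> / 2)"
    using cis_half_a[OF e] by (simp add: mult.assoc)
  finally have phase: "cis (pi / 4) * cis ((pi / 2 + a e + \<phi>) / 2) = \<i> * of_real (half_sign e) * Dh e * cis (\<phi> / 2)" .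
  have "Re (cis (pi / 4) * F (zmid rv e) * cis ((pi / 2 + a e + \<phi>) / 2))
      = Re (F (zmid rv e) * (cis (pi / 4) * cis ((pi / 2 + a e + \<phi>) / 2)))"
    by (simp only: ac_simps)
  also have "\<dots> = Re (of_real (half_sign e) * (\<i> * (Dh e * F (zmid rv e)) * cis (\<phi> / 2)))"
    unfolding phase by (simp only: ac_simps)
  also have "\<dots> = Re (of_real (half_sign e) * (\<i> * (of_real (coord F e) - \<i> * of_real (rev_sign e * coord F (rv e)))
      * (of_real (cos (\<phi> / 2)) + \<i> * of_real (sin (\<phi> / 2)))))"
    unfolding Dh_mult_F[OF e] cis_eq_cos_sin ..
  also have "\<dots> = half_sign e * (rev_sign e * coord F (rv e) * cos (\<phi> / 2) - coord F e * sin (\<phi> / 2))"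
    by (simp add: algebra_simps)
  finally show ?thesis .
qed

lemma sholo_phase:
  assumes e: "e \<in> E"
  shows "cis (- ((pi / 2 + a (R e) - \<theta> (R e)) / 2)) * cis ((beta rv R c rho e - \<theta> e - \<theta> (R e)) / 2)
    = cis (- ((pi / 2 + a e + \<theta> e) / 2)) * of_real (half_sign e * half_sign (R e) * rot_sign e)"
proof -
  have "cis (- ((pi / 2 + a (R e) - \<theta> (R e)) / 2)) * cis ((beta rv R c rho e - \<theta> e - \<theta> (R e)) / 2)
      = cis (- ((pi / 2 + a e + \<theta> e) / 2)) * (cis (a e / 2) * cnj (cis (a (R e) / 2)) * q e)"
    unfolding q_cis cis_cnj cis_mult by (rule arg_cong[where f = cis]) (simp add: field_simps)
  also have "cis (a e / 2) * cnj (cis (a (R e) / 2)) * q e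
      = of_real (half_sign e * half_sign (R e)) * (q e * Dh e) * cnj (Dh (R e))"
    using cis_half_a[OF e] cis_half_a[OF R_in[OF e]] by (simp add: algebra_simps)
  also have "q e * Dh e = of_real (rot_sign e) * Dh (R e)"
    using Dh_R[OF e] by (simp flip: of_real_mult)
  finally show ?thesis
    using Dh_mult_cnj[OF R_in[OF e]] by (simp add: algebra_simps)
qed

lemma sholo_edge_iff:
  assumes e: "e \<in> E"
  shows "Pr (exp (\<i> * of_real (pi / 4)) * F (zmid rv e)) (exp (- (\<i> * of_real ((pi / 2 + a e + \<theta> e) / 2))))
      = Pr (exp (\<i> * of_real (pi / 4)) * F (zmid rv (R e)))
          (exp (- (\<i> * of_real ((pi / 2 + a (R e) - \<theta> (R e)) / 2))))
        * exp (\<i> * of_real ((beta rv R c rho e - \<theta> e - \<theta> (R e)) / 2))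
    \<longleftrightarrow> Tlocal F e - 2 * weighted_coord F e = rot_sign e * Tlocal F (R e)"
proof -
  let ?u1 = "cis (- ((pi / 2 + a e + \<theta> e) / 2))"
  let ?u2 = "cis (- ((pi / 2 + a (R e) - \<theta> (R e)) / 2))"
  have "Re (cis (pi / 4) * F (zmid rv e) * cnj ?u1) = half_sign e * (Tlocal F e - 2 * weighted_coord F e)"
    using Re_rotated_F[OF e, of F "\<theta> e"] unfolding Tlocal_def weighted_coord_def
    by (simp add: cis_cnj algebra_simps)
  then have Pr1: "Pr (cis (pi / 4) * F (zmid rv e)) ?u1
      = of_real (half_sign e * (Tlocal F e - 2 * weighted_coord F e)) * ?u1"
    by (simp add: Pr_unit)
  have "Re (cis (pi / 4) * F (zmid rv (R e)) * cnj ?u2) = half_sign (R e) * Tlocal F (R e)"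
    using Re_rotated_F[OF R_in[OF e], of F "- \<theta> (R e)"] unfolding Tlocal_def weighted_coord_def
    by (simp add: cis_cnj algebra_simps)
  then have Pr2: "Pr (cis (pi / 4) * F (zmid rv (R e))) ?u2 = of_real (half_sign (R e) * Tlocal F (R e)) * ?u2"
    by (simp add: Pr_unit)
  have "Pr (cis (pi / 4) * F (zmid rv e)) ?u1
        = Pr (cis (pi / 4) * F (zmid rv (R e))) ?u2 * cis ((beta rv R c rho e - \<theta> e - \<theta> (R e)) / 2)
    \<longleftrightarrow> of_real (half_sign e * (Tlocal F e - 2 * weighted_coord F e)) * ?u1
        = of_real (half_sign (R e) * half_sign (R e) * (half_sign e * rot_sign e * Tlocal F (R e))) * ?u1"
    unfolding Pr1 Pr2 mult.assoc sholo_phase[OF e] by (simp only: of_real_mult ac_simps)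
  also have "\<dots> \<longleftrightarrow> Tlocal F e - 2 * weighted_coord F e = rot_sign e * Tlocal F (R e)"
    by (simp only: mult_cancel_right of_real_eq_iff cis_neq_zero simp_thms half_sign_square mult_1)
      (simp add: mult.assoc)
  finally show ?thesis
    by (simp only: exp_i_of_real exp_minus_i_of_real)
qed

lemma sholo_iff_Tlocal:
  "(\<forall>v\<in>org ` E. sholo_at E rv org R c rho \<theta> a (\<lambda>z. exp (\<i> * of_real (pi / 4)) * F z) v)
    \<longleftrightarrow> (\<forall>e\<in>E. Tlocal F e - 2 * weighted_coord F e = rot_sign e * Tlocal F (R e))"
  unfolding sholo_at_def using sholo_edge_iff by blast

lemma Tlocal_rec_iff: "(\<forall>e\<in>E. Tlocal F e - 2 * weighted_coord F e = rot_sign e * Tlocal F (R e))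
    \<longleftrightarrow> (\<forall>e\<in>E. T F e = Tlocal F e)"
proof
  assume "\<forall>e\<in>E. Tlocal F e - 2 * weighted_coord F e = rot_sign e * Tlocal F (R e)"
  then show "\<forall>e\<in>E. T F e = Tlocal F e"
    using Tmap_unique[of "Tlocal F" F] by (simp add: algebra_simps)
next
  assume "\<forall>e\<in>E. T F e = Tlocal F e"
  then show "\<forall>e\<in>E. Tlocal F e - 2 * weighted_coord F e = rot_sign e * Tlocal F (R e)"
    using Tmap_rec R_in by (metis add_diff_cancel_left' diff_add_cancel)
qed

lemma sholo_iff_KW:
  "(\<forall>v\<in>org ` E. sholo_at E rv org R c rho \<theta> a (\<lambda>z. exp (\<i> * of_real (pi / 4)) * F z) v)
    \<longleftrightarrow> (\<forall>e\<in>E. KW E rv org R c rho \<theta> (Smap E rv \<theta> a F) e = 0)"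
  unfolding sholo_iff_Tlocal Tlocal_rec_iff KW_Smap_eq_0_iff ..

lemma KW_Smap_factorization:
  assumes factor: "KW_factorization E rv org R c rho \<theta> Dh wc ws wr" and e: "e \<in> E"
  shows "2 * KW E rv org R c rho \<theta> (Smap E rv \<theta> a F) e
    = of_real (Kast rv R \<theta> wc ws wr (T F) e) / Dh e
      - \<i> * of_real (xw \<theta> e) * (of_real (Kast rv R \<theta> wc ws wr (T F) (rv e)) / Dh (rv e))"
proof -
  define g where "g x = complex_of_real (T F x)" for x
  have "g x / Dh x - q x * (g (R x) / Dh (R x)) = 2 * Smap E rv \<theta> a F x" if x: "x \<in> E" for x
  proof -
    have "q x * (g (R x) / Dh (R x)) = g (R x) / (of_real (rot_sign x) * Dh x)"
      using Dh_R[OF x] Dh_nonzero[OF x] by (simp add: q_cis cis_neq_zero field_simps)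
    also have "\<dots> = of_real (rot_sign x) * g (R x) / Dh x"
      by (simp add: rot_sign_def)
    finally have qR: "q x * (g (R x) / Dh (R x)) = of_real (rot_sign x) * g (R x) / Dh x" .
    have "g x / Dh x - q x * (g (R x) / Dh (R x)) = of_real (T F x - rot_sign x * T F (R x)) * cnj (Dh x)"
      unfolding qR unfolding g_def by (simp add: divide_inverse inverse_Dh[OF x] algebra_simps)
    then show ?thesis
      unfolding Tmap_rec[OF x] Smap_eq[OF x] weighted_coord_def by simp
  qed
  then have "KW E rv org R c rho \<theta> (\<lambda>x. g x / Dh x - q x * (g (R x) / Dh (R x))) e
      = KW E rv org R c rho \<theta> (\<lambda>x. 2 * Smap E rv \<theta> a F x) e"
    using e by (intro KW_cong) auto
  then have "KW E rv org R c rho \<theta> (\<lambda>x. g x / Dh x - q x * (g (R x) / Dh (R x))) e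
      = 2 * KW E rv org R c rho \<theta> (Smap E rv \<theta> a F) e"
    by (simp only: KW_const_mult)
  moreover have "KW E rv org R c rho \<theta> (\<lambda>x. g x / Dh x - q x * (g (R x) / Dh (R x))) e
      = Kast rv R \<theta> wc ws wr g e / Dh e - \<i> * of_real (xw \<theta> e) * (Kast rv R \<theta> wc ws wr g (rv e) / Dh (rv e))"
    using factor e unfolding KW_factorization_def by blast
  ultimately show ?thesis
    unfolding g_def Kast_of_real by simp
qed

lemma KW_Smap_iff_Kast:
  assumes factor: "KW_factorization E rv org R c rho \<theta> Dh wc ws wr"
  shows "(\<forall>e\<in>E. KW E rv org R c rho \<theta> (Smap E rv \<theta> a F) e = 0)
    \<longleftrightarrow> (\<forall>e\<in>E. Kast rv R \<theta> wc ws wr (T F) e = 0)"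
proof
  assume KW0: "\<forall>e\<in>E. KW E rv org R c rho \<theta> (Smap E rv \<theta> a F) e = 0"
  define A where "A e = complex_of_real (Kast rv R \<theta> wc ws wr (T F) e) / Dh e" for e
  have swap: "A e = \<i> * of_real (xw \<theta> e) * A (rv e)" if "e \<in> E" for e
    using KW_Smap_factorization[OF factor that, of F] KW0 that unfolding A_def by simp
  show "\<forall>e\<in>E. Kast rv R \<theta> wc ws wr (T F) e = 0"
  proof
    fix e assume e: "e \<in> E"
    have "A e = 0"
    proof (rule eq_0_if_i_mult_swap)
      show "A e = \<i> * of_real (xw \<theta> e) * A (rv e)" using swap[OF e] .
      show "A (rv e) = \<i> * of_real (xw \<theta> e) * A e"
        using swap[OF rv_in[OF e]] e by (simp add: xw_def \<theta>_rv)
    qed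
    then show "Kast rv R \<theta> wc ws wr (T F) e = 0"
      unfolding A_def using Dh_nonzero[OF e] by simp
  qed
next
  assume Kast0: "\<forall>e\<in>E. Kast rv R \<theta> wc ws wr (T F) e = 0"
  show "\<forall>e\<in>E. KW E rv org R c rho \<theta> (Smap E rv \<theta> a F) e = 0"
  proof
    fix e assume e: "e \<in> E"
    have "2 * KW E rv org R c rho \<theta> (Smap E rv \<theta> a F) e = 0"
      using KW_Smap_factorization[OF factor e] Kast0 e rv_in[OF e] by simp
    then show "KW E rv org R c rho \<theta> (Smap E rv \<theta> a F) e = 0" by simp
  qed
qed

lemma Kast_iff_dbar:
  assumes "isoradial E rv org R \<theta>"
  shows "(\<forall>e\<in>E. Kast rv R \<theta> wc ws wr (T F) e = 0)
    \<longleftrightarrow> (\<forall>e\<in>E. dbar rv R \<theta> wc ws wr (T'map E rv org R c rho \<theta> Dh F) e = 0)"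
proof -
  have T': "T'map E rv org R c rho \<theta> Dh F = (\<lambda>x. exp (\<i> * of_real (\<theta> x / 2)) * of_real (T F x))"
    by (rule ext) (simp add: T'map_def)
  have "dbar rv R \<theta> wc ws wr (T'map E rv org R c rho \<theta> Dh F) e = 0 \<longleftrightarrow> Kast rv R \<theta> wc ws wr (T F) e = 0"
    if e: "e \<in> E" for e
  proof -
    have "0 < \<theta> e" "\<theta> e < pi / 2" using assms e unfolding isoradial_def by auto
    then have "0 < sin (2 * \<theta> e)" by (intro sin_gt_zero) auto
    then show ?thesis
      unfolding T' dbar_phase_of_real[where \<theta> = \<theta> and rv = rv and e = e, OF \<theta>_rv[OF e]] by (simp add: cis_neq_zero)
  qed
  then show ?thesis by blast
qed

subsection \<open>The isomorphisms\<close>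

lemma Smap_rlin_iso: "rlin_iso (Smap E rv \<theta> a) (DiamSp E rv) (Lsp E a)"
  unfolding rlin_iso_def
proof (intro conjI ballI allI bij_betw_imageI)
  show "inj_on (Smap E rv \<theta> a) (DiamSp E rv)"
  proof (rule inj_onI)
    fix F G assume "F \<in> DiamSp E rv" "G \<in> DiamSp E rv" and eq: "Smap E rv \<theta> a F = Smap E rv \<theta> a G"
    moreover have "coord F e = coord G e" if e: "e \<in> E" for e
      using fun_cong[OF eq, of e] Smap_eq[OF e] Dh_nonzero[OF e] sin_half_\<theta>_pos[OF e] by simp
    ultimately show "F = G" by (simp add: coord_inj)
  qed
  show "Smap E rv \<theta> a ` DiamSp E rv = Lsp E a"
  proof (intro equalityI subsetI)
    fix f assume "f \<in> Smap E rv \<theta> a ` DiamSp E rv"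
    then obtain F where f: "f = Smap E rv \<theta> a F" by blast
    have "f e = exp (- (\<i> * of_real (a e / 2))) * of_real (half_sign e * weighted_coord F e)"
      if "e \<in> E" for e
      using that unfolding f Smap_eq[OF that] exp_minus_half_a[OF that] weighted_coord_def
      by (simp add: mult_ac flip: of_real_mult)
    moreover have "\<forall>e. e \<notin> E \<longrightarrow> f e = 0"
      unfolding f Smap_def by simp
    ultimately show "f \<in> Lsp E a"
      unfolding Lsp_def by blast
  next
    fix f assume f: "f \<in> Lsp E a"
    define \<rho> where "\<rho> e = Re (f e * Dh e) / sin (\<theta> e / 2)" for e
    have "Smap E rv \<theta> a (of_coord \<rho>) e = f e" for e
    proof (cases "e \<in> E")
      case True
      obtain r where "f e = exp (- (\<i> * of_real (a e / 2))) * of_real r"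
        using f True unfolding Lsp_def by blast
      then have fD: "f e * Dh e = of_real (half_sign e * r)"
        unfolding exp_minus_half_a[OF True] using Dh_mult_cnj[OF True] by (simp add: mult_ac)
      have "sin (\<theta> e / 2) * \<rho> e = Re (f e * Dh e)"
        unfolding \<rho>_def using sin_half_\<theta>_pos[OF True] by simp
      then have "Smap E rv \<theta> a (of_coord \<rho>) e = of_real (Re (f e * Dh e)) * cnj (Dh e)"
        by (simp only: Smap_eq[OF True] coord_of_coord[OF True])
      also have "of_real (Re (f e * Dh e)) = f e * Dh e"
        using fD by simp
      also have "f e * Dh e * cnj (Dh e) = f e"
        using Dh_mult_cnj[OF True] by (simp add: mult.assoc)
      finally show ?thesis .
    next
      case False
      then show ?thesis using f unfolding Lsp_def Smap_def by simp
    qed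
    then show "f \<in> Smap E rv \<theta> a ` DiamSp E rv"
      by (intro image_eqI[OF _ of_coord_in_DiamSp[of \<rho>]]) (simp add: fun_eq_iff)
  qed
qed (simp_all add: Smap_add Smap_scaleR)

lemma Tmap_inj: "inj_on T (DiamSp E rv)"
proof (rule inj_onI)
  fix F G assume "F \<in> DiamSp E rv" "G \<in> DiamSp E rv" and eq: "T F = T G"
  moreover have "coord F e = coord G e" if e: "e \<in> E" for e
    using Tmap_rec[OF e, of F] Tmap_rec[OF e, of G] eq sin_half_\<theta>_pos[OF e]
    unfolding weighted_coord_def by simp
  ultimately show "F = G" by (simp add: coord_inj)
qed

text \<open>Surjectivity: prescribe the weighted coordinates by the recursion of Tmap_rec; the
recursion then has g as its unique solution.\<close>

lemma Tmap_rlin_iso: "rlin_iso T (DiamSp E rv) (RB E)"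
  unfolding rlin_iso_def
proof (intro conjI ballI allI bij_betw_imageI Tmap_inj)
  show "T ` DiamSp E rv = RB E"
  proof (intro equalityI subsetI)
    fix g assume g: "g \<in> RB E"
    define F where "F = of_coord (\<lambda>e. (g e - rot_sign e * g (R e)) / (2 * sin (\<theta> e / 2)))"
    have "\<forall>e\<in>E. g e - rot_sign e * g (R e) = 2 * weighted_coord F e"
    proof
      fix e assume e: "e \<in> E"
      show "g e - rot_sign e * g (R e) = 2 * weighted_coord F e"
        unfolding F_def weighted_coord_def using sin_half_\<theta>_pos[OF e] by (simp add: coord_of_coord[OF e])
    qed
    then have "g = T F"
      using Tmap_unique g unfolding RB_def Tmap_def fun_eq_iff by auto
    moreover have "F \<in> DiamSp E rv"
      unfolding F_def by (rule of_coord_in_DiamSp)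
    ultimately show "g \<in> T ` DiamSp E rv" by blast
  qed (auto simp: RB_def Tmap_def)
qed (simp_all add: Tmap_add Tmap_scaleR)

lemma T'map_rlin_iso:
  "rlin_iso (T'map E rv org R c rho \<theta> Dh) (DiamSp E rv) (T'map E rv org R c rho \<theta> Dh ` DiamSp E rv)"
  unfolding rlin_iso_def
proof (intro conjI ballI allI bij_betw_imageI refl)
  show "inj_on (T'map E rv org R c rho \<theta> Dh) (DiamSp E rv)"
  proof (rule inj_onI)
    fix F G assume "F \<in> DiamSp E rv" "G \<in> DiamSp E rv"
      and eq: "T'map E rv org R c rho \<theta> Dh F = T'map E rv org R c rho \<theta> Dh G"
    moreover have "T F = T G"
    proof
      fix w
      show "T F w = T G w"
        using fun_cong[OF eq, of w] unfolding T'map_def by simp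
    qed
    ultimately show "F = G" using Tmap_inj by (meson inj_onD)
  qed
qed (simp_all add: T'map_add T'map_scaleR)

end

theorem theorem4p3:
  fixes E :: "'e set" and rv R :: "'e \<Rightarrow> 'e" and org :: "'e \<Rightarrow> 'v"
    and \<theta> a rho c :: "'e \<Rightarrow> real" and Dh :: "'e \<Rightarrow> complex"
    and wc ws wr :: "'e \<Rightarrow> real"
  assumes graph: "rotation_system E rv org R"
    and weights: "weights_ok E rv \<theta>"
    and angles: "angle_data E rv org R c rho a"
    and kast: "kasteleyn E rv R wc ws wr"
    and sqrtD: "\<forall>e\<in>E. Dh e ^ 2 = exp (\<i> * of_real (a e))"
    and factor: "KW_factorization E rv org R c rho \<theta> Dh wc ws wr"
  shows "rlin_iso (Smap E rv \<theta> a) (DiamSp E rv) (Lsp E a)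
    \<and> rlin_iso (Tmap E rv org R c rho \<theta> Dh) (DiamSp E rv) (RB E)
    \<and> rlin_iso (T'map E rv org R c rho \<theta> Dh) (DiamSp E rv)
         (T'map E rv org R c rho \<theta> Dh ` DiamSp E rv)
    \<and> (\<forall>F\<in>DiamSp E rv.
         ((\<forall>v\<in>org ` E. sholo_at E rv org R c rho \<theta> a (\<lambda>z. exp (\<i> * of_real (pi / 4)) * F z) v)
            \<longleftrightarrow> (\<forall>e\<in>E. KW E rv org R c rho \<theta> (Smap E rv \<theta> a F) e = 0))
       \<and> ((\<forall>e\<in>E. KW E rv org R c rho \<theta> (Smap E rv \<theta> a F) e = 0)
            \<longleftrightarrow> (\<forall>e\<in>E. Kast rv R \<theta> wc ws wr (Tmap E rv org R c rho \<theta> Dh F) e = 0)))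
    \<and> (isoradial E rv org R \<theta> \<longrightarrow>
         (\<forall>F\<in>DiamSp E rv.
            (\<forall>e\<in>E. Kast rv R \<theta> wc ws wr (Tmap E rv org R c rho \<theta> Dh F) e = 0)
            \<longleftrightarrow> (\<forall>e\<in>E. dbar rv R \<theta> wc ws wr (T'map E rv org R c rho \<theta> Dh F) e = 0)))"
proof -
  interpret kw_setting E rv R org \<theta> a rho c Dh
    using graph weights angles sqrtD by unfold_locales
  show ?thesis
    using Smap_rlin_iso Tmap_rlin_iso T'map_rlin_iso sholo_iff_KW KW_Smap_iff_Kast[OF factor]
      Kast_iff_dbar by blast
qed

end
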